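(* An even nonnegative integer $n$ satisfies $v(n)=3$ if and only if $n\in\{20,26,34,46,48,60\}$.
   Context: A hyperbinary expansion of a nonnegative integer $n$ is a word $x_0\cdots x_k$ over $\{0,1,2\}$ with $x_0\ne0$ and $\sum_i x_i2^{k-i}=n$. The empty word is the unique hyperbinary expansion of $0$. Write $\mathcal H(n)$ for the set of such expansions and $b(n)=|\mathcal H(n)|$. $A(n)$ is the directed graph on $\mathcal H(n)$ with an arc from $\mathbf x02\mathbf y$ to $\mathbf x10\mathbf y$, from $2\mathbf y$ to $10\mathbf y$, and from $\mathbf x12\mathbf y$ to $\mathbf x20\mathbf y$, for arbitrary words $\mathbf x,\mathbf y$ whenever both endpoints lie in $\mathcal H(n)$. $A(n)$ is connected. $v(n)$ denotes the cyclomatic number of $A(n)$: (number of arcs) $-\,b(n)+1$. *)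

theory Defs
  imports Main
begin

text \<open>Words over the alphabet {0,1,2} are lists of naturals, most significant digit first.\<close>

definition hb_value :: "nat list \<Rightarrow> nat" where
  "hb_value xs = foldl (\<lambda>a d. 2 * a + d) 0 xs"

definition hyperbinary :: "nat \<Rightarrow> nat list set" where
  "hyperbinary n = {xs. set xs \<subseteq> {0,1,2} \<and> (xs \<noteq> [] \<longrightarrow> hd xs \<noteq> 0) \<and> hb_value xs = n}"

definition b :: "nat \<Rightarrow> nat" where
  "b n = card (hyperbinary n)"

definition hb_arcs :: "nat \<Rightarrow> (nat list \<times> nat list) set" where
  "hb_arcs n = {(u, w). u \<in> hyperbinary n \<and> w \<in> hyperbinary n \<and>
     ((\<exists>x y. u = x @ [0,2] @ y \<and> w = x @ [1,0] @ y) \<or>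
      (\<exists>y. u = 2 # y \<and> w = [1,0] @ y) \<or>
      (\<exists>x y. u = x @ [1,2] @ y \<and> w = x @ [2,0] @ y))}"

definition v :: "nat \<Rightarrow> int" where
  "v n = int (card (hb_arcs n)) - int (b n) + 1"

end

theory Submission
  imports Defs
begin

text \<open>
  Splitting off the last digit, the expansions of \<open>2m+1\<close> are those of \<open>m\<close> followed by 1, and
  those of \<open>2m+2\<close> are those of \<open>m+1\<close> followed by 0 and those of \<open>m\<close> followed by 2. An arc
  of \<open>A(2m+2)\<close> either keeps the last digit, or rewrites the final two digits (or a whole word 2),
  turning \<open>u2\<close> into \<open>u'0\<close> where \<open>u'\<close> is \<open>u\<close> with its last digit raised; this is possible for
  exactly the \<open>b(m div 2)\<close> expansions \<open>u\<close> of \<open>m\<close> not ending in 2. Hence \<open>v(2m+1) = v(m)\<close> and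
  \<open>v(2m+2) = v(m+1) + v(m) + b(m div 2) - 1\<close>, i.e. \<open>v(2q) = v(2(q div 2)) + v(j) + b(j) - 1\<close>
  with \<open>j = (q-1) div 2\<close>. As \<open>v \<ge> 0\<close> and every even \<open>j\<close> satisfies \<open>j < 2^b(j)\<close>, a bound
  \<open>v(2q) \<le> 3\<close> for large \<open>q\<close> forces \<open>v(2(q div 2)) \<le> 3\<close> and \<open>j\<close> odd; inductively \<open>q\<close> is then
  a power of two or one less, and for those \<open>v(2q) = 0\<close>. The finitely many \<open>q < 62\<close> are
  settled by evaluating the recursions.
\<close>

lemma nat_0_odd_even_cases:
  fixes n :: nat
  obtains "n = 0" | m where "n = 2*m+1" | m where "n = 2*m+2"
proof -
  consider "n = 0" | "odd n" | "even n" "n \<noteq> 0" by blast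
  then show ?thesis
  proof cases
    case 2 then show ?thesis using that(2) by (metis oddE)
  next
    case 3 then obtain k where "n = 2*k" by blast
    with 3 have "n = 2*(k-1)+2" by simp
    then show ?thesis using that(3) by blast
  qed (use that in blast)
qed

lemma odd_even_induct [case_names zero odd even]:
  fixes n :: nat
  assumes "P 0"
    and "\<And>m. P m \<Longrightarrow> P (2*m+1)"
    and "\<And>m. P m \<Longrightarrow> P (m+1) \<Longrightarrow> P (2*m+2)"
  shows "P n"
proof (induction n rule: less_induct)
  case (less n)
  show ?case
    by (cases n rule: nat_0_odd_even_cases) (use assms less in simp_all)
qed

subsection \<open>Hyperbinary expansions\<close>

lemma hb_value_Nil [simp]: "hb_value [] = 0"
  by (simp add: hb_value_def)

lemma hb_value_snoc [simp]: "hb_value (xs @ [d]) = 2 * hb_value xs + d"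
  by (simp add: hb_value_def)

lemma Nil_in_hyperbinary_iff: "[] \<in> hyperbinary n \<longleftrightarrow> n = 0"
  by (auto simp: hyperbinary_def)

lemma snoc_in_hyperbinary_iff:
  "xs @ [d] \<in> hyperbinary n \<longleftrightarrow>
     d \<in> {0,1,2} \<and> (xs = [] \<longrightarrow> d \<noteq> 0) \<and> xs \<in> hyperbinary (hb_value xs) \<and> 2 * hb_value xs + d = n"
  by (auto simp: hyperbinary_def hd_append)

lemma hyperbinary_0: "hyperbinary 0 = {[]}"
proof -
  have zero_digits: "set xs \<subseteq> {0}" if "hb_value xs = 0" for xs
    using that by (induction xs rule: rev_induct) auto
  have "xs = []" if xs: "xs \<in> hyperbinary 0" for xs
  proof (rule ccontr)
    assume "xs \<noteq> []"
    with xs have "hd xs \<in> set xs" "hd xs \<noteq> 0" "set xs \<subseteq> {0}"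
      using zero_digits by (auto simp: hyperbinary_def)
    then show False by auto
  qed
  then show ?thesis
    using Nil_in_hyperbinary_iff by blast
qed

lemma hyperbinary_odd: "hyperbinary (2*m+1) = (\<lambda>xs. xs @ [1]) ` hyperbinary m"
proof (intro set_eqI iffI)
  fix w assume w: "w \<in> hyperbinary (2*m+1)"
  then obtain xs d where wd: "w = xs @ [d]"
    using Nil_in_hyperbinary_iff by (cases w rule: rev_exhaust) auto
  with w have d: "d \<in> {0,1,2}" "xs \<in> hyperbinary (hb_value xs)" "2 * hb_value xs + d = 2*m+1"
    by (auto simp only: snoc_in_hyperbinary_iff)
  then have "d = 1" "hb_value xs = m" by (auto; presburger)+
  with wd d show "w \<in> (\<lambda>xs. xs @ [1]) ` hyperbinary m" by auto
next
  fix w assume "w \<in> (\<lambda>xs. xs @ [1]) ` hyperbinary m"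
  then obtain xs where "w = xs @ [1]" "xs \<in> hyperbinary m" by auto
  then show "w \<in> hyperbinary (2*m+1)"
    by (auto simp: snoc_in_hyperbinary_iff hyperbinary_def hd_append)
qed

lemma hyperbinary_even:
  "hyperbinary (2*m+2) = (\<lambda>xs. xs @ [0]) ` hyperbinary (m+1) \<union> (\<lambda>xs. xs @ [2]) ` hyperbinary m"
proof (intro set_eqI iffI)
  fix w assume w: "w \<in> hyperbinary (2*m+2)"
  then obtain xs d where wd: "w = xs @ [d]"
    using Nil_in_hyperbinary_iff by (cases w rule: rev_exhaust) auto
  with w have d: "d \<in> {0,1,2}" "xs \<in> hyperbinary (hb_value xs)" "2 * hb_value xs + d = 2*m+2"
    by (auto simp only: snoc_in_hyperbinary_iff)
  then have "d = 0 \<and> hb_value xs = m+1 \<or> d = 2 \<and> hb_value xs = m"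
    by (auto; presburger)
  with wd d show "w \<in> (\<lambda>xs. xs @ [0]) ` hyperbinary (m+1) \<union> (\<lambda>xs. xs @ [2]) ` hyperbinary m"
    by auto
next
  fix w assume "w \<in> (\<lambda>xs. xs @ [0]) ` hyperbinary (m+1) \<union> (\<lambda>xs. xs @ [2]) ` hyperbinary m"
  then consider xs where "w = xs @ [0]" "xs \<in> hyperbinary (m+1)"
    | xs where "w = xs @ [2]" "xs \<in> hyperbinary m"
    by auto
  then show "w \<in> hyperbinary (2*m+2)"
    by cases (use Nil_in_hyperbinary_iff[of "m+1"] in \<open>auto simp: snoc_in_hyperbinary_iff hyperbinary_def hd_append\<close>)
qed

lemma finite_hyperbinary: "finite (hyperbinary n)"
  by (induction n rule: odd_even_induct) (unfold hyperbinary_0 hyperbinary_odd hyperbinary_even, simp_all)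

lemma b_0: "b 0 = 1"
  by (simp add: b_def hyperbinary_0)

lemma b_odd: "b (2*m+1) = b m"
  unfolding b_def hyperbinary_odd by (rule card_image) (simp add: inj_on_def)

lemma b_even: "b (2*m+2) = b (m+1) + b m"
proof -
  have inj: "inj_on (\<lambda>xs. xs @ [d]) X" for d :: nat and X by (simp add: inj_on_def)
  have "card (hyperbinary (2*m+2)) =
      card ((\<lambda>xs. xs @ [0]) ` hyperbinary (m+1)) + card ((\<lambda>xs. xs @ [2]) ` hyperbinary m)"
    unfolding hyperbinary_even by (rule card_Un_disjoint) (auto simp: finite_hyperbinary)
  then show ?thesis
    unfolding b_def by (simp add: card_image[OF inj])
qed

lemma b_pos: "b n \<ge> 1"
  by (induction n rule: odd_even_induct) (unfold b_0 b_odd b_even, simp_all)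

definition hb_step :: "nat list \<Rightarrow> nat list \<Rightarrow> bool" where
  "hb_step u w \<longleftrightarrow>
     (\<exists>x y. u = x @ [0,2] @ y \<and> w = x @ [1,0] @ y) \<or>
     (\<exists>y. u = 2 # y \<and> w = [1,0] @ y) \<or>
     (\<exists>x y. u = x @ [1,2] @ y \<and> w = x @ [2,0] @ y)"

definition incr_last :: "nat list \<Rightarrow> nat list \<Rightarrow> bool" where
  "incr_last u w \<longleftrightarrow>
     (\<exists>x. u = x @ [0] \<and> w = x @ [1]) \<or> (u = [] \<and> w = [1]) \<or> (\<exists>x. u = x @ [1] \<and> w = x @ [2])"

lemma hb_arcs_eq: "hb_arcs n = {(u, w). u \<in> hyperbinary n \<and> w \<in> hyperbinary n \<and> hb_step u w}"
  unfolding hb_arcs_def hb_step_def by simp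

lemma snoc_eq_append_cases:
  assumes "u @ [d] = p @ y"
  obtains "y = []" "u @ [d] = p" | y' where "y = y' @ [d]" "u = p @ y'"
  using assms by (cases y rule: rev_exhaust) auto

text \<open>An arc changes the last digit exactly when the rewritten factor ends the word.\<close>

lemma hb_step_snoc_iff:
  "hb_step (u @ [d]) (w @ [e]) \<longleftrightarrow> (d = e \<and> hb_step u w) \<or> (d = 2 \<and> e = 0 \<and> incr_last u w)"
proof
  assume "hb_step (u @ [d]) (w @ [e])"
  then consider x y where "u @ [d] = (x @ [0,2]) @ y" "w @ [e] = (x @ [1,0]) @ y"
    | y where "u @ [d] = [2] @ y" "w @ [e] = [1,0] @ y"
    | x y where "u @ [d] = (x @ [1,2]) @ y" "w @ [e] = (x @ [2,0]) @ y"
    unfolding hb_step_def by auto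
  then show "(d = e \<and> hb_step u w) \<or> (d = 2 \<and> e = 0 \<and> incr_last u w)"
    by cases (erule snoc_eq_append_cases; auto simp: hb_step_def incr_last_def)+
next
  assume "(d = e \<and> hb_step u w) \<or> (d = 2 \<and> e = 0 \<and> incr_last u w)"
  then show "hb_step (u @ [d]) (w @ [e])"
    unfolding hb_step_def incr_last_def by (elim conjE disjE exE; force)
qed

definition hb_incr :: "nat list \<Rightarrow> nat list" where
  "hb_incr u = (if u = [] then [1] else butlast u @ [last u + 1])"

definition incrementable :: "nat \<Rightarrow> nat list set" where
  "incrementable m = {u \<in> hyperbinary m. u = [] \<or> last u \<noteq> 2}"

lemma hb_incr_in_hyperbinary: "u \<in> incrementable m \<Longrightarrow> hb_incr u \<in> hyperbinary (m+1)"
proof (cases u rule: rev_exhaust)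
  case Nil
  moreover assume "u \<in> incrementable m"
  ultimately show ?thesis
    by (auto simp: incrementable_def Nil_in_hyperbinary_iff hb_incr_def hyperbinary_def hb_value_def)
next
  case (snoc x t)
  moreover assume "u \<in> incrementable m"
  ultimately show ?thesis
    by (auto simp: incrementable_def hb_incr_def snoc_in_hyperbinary_iff)
qed

lemma incr_last_iff:
  assumes "u \<in> hyperbinary m"
  shows "incr_last u w \<longleftrightarrow> u \<in> incrementable m \<and> w = hb_incr u"
proof (cases u rule: rev_exhaust)
  case Nil
  with assms show ?thesis by (auto simp: incr_last_def incrementable_def hb_incr_def)
next
  case (snoc x t)
  with assms have "t \<in> {0,1,2}" by (simp add: snoc_in_hyperbinary_iff)
  with snoc assms show ?thesis by (auto simp: incr_last_def incrementable_def hb_incr_def)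
qed

lemma hb_arcs_0: "hb_arcs 0 = {}"
  by (auto simp: hb_arcs_eq hyperbinary_0 hb_step_def)

lemma hb_arcs_odd: "hb_arcs (2*m+1) = (\<lambda>(u, w). (u @ [1], w @ [1])) ` hb_arcs m"
proof (intro set_eqI iffI)
  fix p assume "p \<in> hb_arcs (2*m+1)"
  then obtain u' w' where p: "p = (u', w')" "u' \<in> hyperbinary (2*m+1)" "w' \<in> hyperbinary (2*m+1)"
      "hb_step u' w'"
    by (auto simp: hb_arcs_eq)
  then obtain u w where "u' = u @ [1]" "w' = w @ [1]" "u \<in> hyperbinary m" "w \<in> hyperbinary m"
    unfolding hyperbinary_odd by auto
  with p show "p \<in> (\<lambda>(u, w). (u @ [1], w @ [1])) ` hb_arcs m"
    by (auto simp: hb_arcs_eq hb_step_snoc_iff)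
next
  fix p assume "p \<in> (\<lambda>(u, w). (u @ [1], w @ [1])) ` hb_arcs m"
  then show "p \<in> hb_arcs (2*m+1)"
    unfolding hb_arcs_eq hyperbinary_odd by (auto simp: hb_step_snoc_iff)
qed

lemma hb_arcs_even:
  "hb_arcs (2*m+2) =
     (\<lambda>(u, w). (u @ [0], w @ [0])) ` hb_arcs (m+1) \<union>
     (\<lambda>(u, w). (u @ [2], w @ [2])) ` hb_arcs m \<union>
     (\<lambda>u. (u @ [2], hb_incr u @ [0])) ` incrementable m"
proof (intro set_eqI iffI)
  fix p assume "p \<in> hb_arcs (2*m+2)"
  then obtain u' w' where p: "p = (u', w')" "u' \<in> hyperbinary (2*m+2)" "w' \<in> hyperbinary (2*m+2)"
      "hb_step u' w'"
    by (auto simp: hb_arcs_eq)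
  from p(2) obtain u d where u: "u' = u @ [d]"
      "d = 0 \<and> u \<in> hyperbinary (m+1) \<or> d = 2 \<and> u \<in> hyperbinary m"
    unfolding hyperbinary_even by auto
  from p(3) obtain w e where w: "w' = w @ [e]"
      "e = 0 \<and> w \<in> hyperbinary (m+1) \<or> e = 2 \<and> w \<in> hyperbinary m"
    unfolding hyperbinary_even by auto
  from p(4) u w have "(d = e \<and> hb_step u w) \<or> (d = 2 \<and> e = 0 \<and> incr_last u w)"
    by (simp add: hb_step_snoc_iff)
  then show "p \<in> (\<lambda>(u, w). (u @ [0], w @ [0])) ` hb_arcs (m+1) \<union>
     (\<lambda>(u, w). (u @ [2], w @ [2])) ` hb_arcs m \<union>
     (\<lambda>u. (u @ [2], hb_incr u @ [0])) ` incrementable m"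
  proof
    assume "d = e \<and> hb_step u w"
    with p u w show ?thesis by (auto simp: hb_arcs_eq)
  next
    assume "d = 2 \<and> e = 0 \<and> incr_last u w"
    with u w incr_last_iff[of u m w] have "u \<in> incrementable m" "w = hb_incr u" "d = 2" "e = 0"
      by auto
    with p u w show ?thesis by auto
  qed
next
  fix p assume "p \<in> (\<lambda>(u, w). (u @ [0], w @ [0])) ` hb_arcs (m+1) \<union>
     (\<lambda>(u, w). (u @ [2], w @ [2])) ` hb_arcs m \<union>
     (\<lambda>u. (u @ [2], hb_incr u @ [0])) ` incrementable m"
  then consider
      u w where "p = (u @ [0], w @ [0])" "u \<in> hyperbinary (m+1)" "w \<in> hyperbinary (m+1)" "hb_step u w"
    | u w where "p = (u @ [2], w @ [2])" "u \<in> hyperbinary m" "w \<in> hyperbinary m" "hb_step u w"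
    | u where "p = (u @ [2], hb_incr u @ [0])" "u \<in> incrementable m"
    by (auto simp: hb_arcs_eq)
  then show "p \<in> hb_arcs (2*m+2)"
  proof cases
    case 3
    then have "u \<in> hyperbinary m" "hb_incr u \<in> hyperbinary (m+1)" "incr_last u (hb_incr u)"
      using hb_incr_in_hyperbinary incr_last_iff[of u m] by (auto simp: incrementable_def)
    with 3 show ?thesis
      unfolding hb_arcs_eq hyperbinary_even by (auto simp: hb_step_snoc_iff)
  qed (unfold hb_arcs_eq hyperbinary_even, auto simp: hb_step_snoc_iff)
qed

lemma finite_hb_arcs: "finite (hb_arcs n)"
proof (rule finite_subset)
  show "hb_arcs n \<subseteq> hyperbinary n \<times> hyperbinary n"
    by (auto simp: hb_arcs_eq)
qed (simp add: finite_hyperbinary)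

lemma card_incrementable: "card (incrementable m) = b (m div 2)"
proof (cases m rule: nat_0_odd_even_cases)
  case 1
  then have "incrementable m = {[]}" by (auto simp: incrementable_def hyperbinary_0)
  with 1 show ?thesis by (simp add: b_0)
next
  case (2 k)
  then have "incrementable m = hyperbinary m"
    using hyperbinary_odd[of k] by (auto simp: incrementable_def)
  with 2 show ?thesis using b_odd[of k] by (simp add: b_def)
next
  case (3 k)
  then have "incrementable m = (\<lambda>xs. xs @ [0]) ` hyperbinary (k+1)"
    using hyperbinary_even[of k] by (auto simp: incrementable_def)
  moreover have "card ((\<lambda>xs. xs @ [0::nat]) ` hyperbinary (k+1)) = b (k+1)"
    unfolding b_def by (rule card_image) (simp add: inj_on_def)
  ultimately show ?thesis using 3 by simp
qed

lemma card_hb_arcs_odd: "card (hb_arcs (2*m+1)) = card (hb_arcs m)"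
  unfolding hb_arcs_odd by (rule card_image) (auto simp: inj_on_def)

lemma card_hb_arcs_even:
  "card (hb_arcs (2*m+2)) = card (hb_arcs (m+1)) + card (hb_arcs m) + b (m div 2)"
proof -
  let ?A = "(\<lambda>(u, w). (u @ [0::nat], w @ [0])) ` hb_arcs (m+1)"
  let ?B = "(\<lambda>(u, w). (u @ [2::nat], w @ [2])) ` hb_arcs m"
  let ?C = "(\<lambda>u. (u @ [2::nat], hb_incr u @ [0])) ` incrementable m"
  have "finite (incrementable m)"
    by (simp add: incrementable_def finite_hyperbinary)
  then have "card (?A \<union> ?B \<union> ?C) = card ?A + card ?B + card ?C"
    using finite_hb_arcs by (subst card_Un_disjoint; auto simp: card_Un_disjoint)+
  also have "card ?A = card (hb_arcs (m+1))"
    by (rule card_image) (auto simp: inj_on_def)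
  also have "card ?B = card (hb_arcs m)"
    by (rule card_image) (auto simp: inj_on_def)
  also have "card ?C = card (incrementable m)"
    by (rule card_image) (auto simp: inj_on_def)
  finally show ?thesis
    unfolding hb_arcs_even card_incrementable .
qed

subsection \<open>Recursions for the cyclomatic number\<close>

lemma v_0: "v 0 = 0"
  by (simp add: v_def hb_arcs_0 b_0)

lemma v_odd: "v (2*m+1) = v m"
  by (simp only: v_def card_hb_arcs_odd b_odd)

lemma v_even: "v (2*m+2) = v (m+1) + v m + int (b (m div 2)) - 1"
  unfolding v_def card_hb_arcs_even b_even by simp

lemma v_nonneg: "v n \<ge> 0"
proof (induction n rule: odd_even_induct)
  case (even m)
  then show ?case using v_even[of m] b_pos[of "m div 2"] by simp
qed (unfold v_0 v_odd, simp_all)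

lemma v_double:
  assumes "q \<ge> 1"
  shows "v (2*q) = v (2*(q div 2)) + v ((q-1) div 2) + int (b ((q-1) div 2)) - 1"
proof -
  from assms consider j where "q = 2*j+1" | j where "q = 2*j+2"
    by (cases q rule: nat_0_odd_even_cases) auto
  then show ?thesis
  proof cases
    case 1
    then have "2*q = 2*(2*j)+2" "q div 2 = j" "(q-1) div 2 = j" by simp_all
    then show ?thesis using v_even[of "2*j"] v_odd[of j] by simp
  next
    case 2
    then have "2*q = 2*(2*j+1)+2" "q div 2 = j+1" "(q-1) div 2 = j" "(2*j+1) div 2 = j" by simp_all
    then show ?thesis using v_even[of "2*j+1"] v_odd[of j] by (simp add: algebra_simps)
  qed
qed

fun hb_count :: "nat \<Rightarrow> nat" where
  "hb_count n =
     (if n = 0 then 1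
      else if odd n then hb_count (n div 2)
      else hb_count (n div 2) + hb_count (n div 2 - 1))"

fun arc_count :: "nat \<Rightarrow> nat" where
  "arc_count n =
     (if n = 0 then 0
      else if odd n then arc_count (n div 2)
      else arc_count (n div 2) + arc_count (n div 2 - 1) + hb_count ((n div 2 - 1) div 2))"

declare hb_count.simps [simp del] arc_count.simps [simp del]

lemma b_eq_hb_count: "b n = hb_count n"
proof (induction n rule: odd_even_induct)
  case zero
  then show ?case by (simp add: b_0 hb_count.simps)
next
  case (odd m)
  then show ?case using b_odd[of m] by (subst hb_count.simps) simp
next
  case (even m)
  then show ?case using b_even[of m] by (subst hb_count.simps) simp
qed

lemma card_hb_arcs_eq_arc_count: "card (hb_arcs n) = arc_count n"
proof (induction n rule: odd_even_induct)
  case zero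
  then show ?case by (simp add: hb_arcs_0 arc_count.simps)
next
  case (odd m)
  then show ?case using card_hb_arcs_odd[of m] by (subst arc_count.simps) simp
next
  case (even m)
  then show ?case using card_hb_arcs_even[of m] b_eq_hb_count[of "m div 2"]
    by (subst arc_count.simps) simp
qed

lemma v_eq_counts: "v n = int (arc_count n) - int (hb_count n) + 1"
  by (simp add: v_def b_eq_hb_count card_hb_arcs_eq_arc_count)

lemma v_double_small:
  assumes "q < 62"
  shows "(v (2*q) = 3 \<longleftrightarrow> q \<in> {10, 13, 17, 23, 24, 30}) \<and> (31 \<le> q \<longrightarrow> v (2*q) \<le> 3 \<longrightarrow> q \<in> {31, 32})"
proof -
  have "list_all (\<lambda>q.
      (int (arc_count (2*q)) - int (hb_count (2*q)) + 1 = 3 \<longleftrightarrow> q \<in> {10, 13, 17, 23, 24, 30}) \<and>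
      (31 \<le> q \<longrightarrow> int (arc_count (2*q)) - int (hb_count (2*q)) + 1 \<le> 3 \<longrightarrow> q \<in> {31, 32}))
    [0..<62]"
    by code_simp
  with assms show ?thesis
    unfolding list_all_iff v_eq_counts by simp
qed

subsection \<open>Large arguments\<close>

lemma even_less_exp_b: "even e \<Longrightarrow> e < 2 ^ b e"
proof (induction e rule: odd_even_induct)
  case zero
  then show ?case by (simp add: b_0)
next
  case (odd m)
  then show ?case by simp
next
  case (even m)
  obtain k where k: "k = m \<or> k = m+1" "even k"
    using that[of m] that[of "m+1"] by (cases "even m") auto
  then have "k < 2 ^ b k" using even.IH by auto
  moreover have "m + 1 \<noteq> 2 ^ b k" if "k = m"
  proof
    assume "m + 1 = 2 ^ b k"
    then have "even (m + 1)" using b_pos[of k] by simp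
    with k that show False by simp
  qed
  ultimately have "m + 1 < 2 ^ b k" using k(1) by linarith
  then have "2*m+2 < 2 ^ (b k + 1)" by simp
  also have "\<dots> \<le> 2 ^ (b (m+1) + b m)"
    using k b_pos[of m] b_pos[of "m+1"] by (intro power_increasing) auto
  finally show ?case unfolding b_even by (simp add: add.commute)
qed

lemma b_v_pow2_minus_1: "b (2^i - 1) = 1 \<and> v (2^i - 1) = 0"
proof (induction i)
  case 0
  then show ?case by (simp add: b_0 v_0)
next
  case (Suc i)
  have "(2::nat) ^ i \<ge> 1" by simp
  then have "(2::nat) ^ Suc i - 1 = 2 * (2^i - 1) + 1" by (simp; linarith)
  then show ?case
    using Suc b_odd[of "2^i - 1"] v_odd[of "2^i - 1"] by simp
qed

definition pow2_or_pred :: "nat \<Rightarrow> bool" where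
  "pow2_or_pred q \<longleftrightarrow> (\<exists>a. q = 2^a \<or> q = 2^a - 1)"

lemma v_double_pow2_or_pred:
  assumes "pow2_or_pred q"
  shows "v (2*q) = 0"
proof -
  have "v (2 * 2^a) = 0 \<and> v (2 * (2^a - 1)) = 0" for a
  proof (induction a)
    case 0
    then show ?case using v_even[of 0] v_odd[of 0] by (simp add: v_0 b_0 numeral_2_eq_2)
  next
    case (Suc a)
    define x :: nat where "x = 2^a"
    have "x \<ge> 1" "b (x - 1) = 1" "v (x - 1) = 0" "v (2*x) = 0" "v (2 * (x - 1)) = 0"
      using b_v_pow2_minus_1[of a] Suc.IH by (simp_all add: x_def)
    moreover have "(2*x - 1) div 2 = x - 1" "(2*x - 1 - 1) div 2 = x - 1" "2*x - 1 \<ge> 1"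
      using \<open>x \<ge> 1\<close> by presburger+
    ultimately have "v (2 * (2*x)) = 0" "v (2 * (2*x - 1)) = 0"
      using v_double[of "2*x"] v_double[of "2*x - 1"] by simp_all
    then show ?case by (simp add: x_def)
  qed
  with assms show ?thesis
    unfolding pow2_or_pred_def by auto
qed

lemma pow2_or_pred_of_half:
  assumes "pow2_or_pred (q div 2)" and "odd ((q - 1) div 2)"
  shows "pow2_or_pred q"
proof -
  from assms(1) obtain a where a: "q div 2 = 2^a \<or> q div 2 = 2^a - 1"
    unfolding pow2_or_pred_def by blast
  have "q = 2 * (q div 2) \<or> q = 2 * (q div 2) + 1" by presburger
  then show ?thesis
  proof
    assume 1: "q = 2 * (q div 2)"
    from a show ?thesis
    proof
      assume "q div 2 = 2^a"
      with 1 have "q = 2 ^ Suc a" by simp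
      then show ?thesis unfolding pow2_or_pred_def by blast
    next
      assume half: "q div 2 = 2^a - 1"
      show ?thesis
      proof (cases a)
        case 0
        with 1 half have "q = 2^0 - 1" by simp
        then show ?thesis unfolding pow2_or_pred_def by blast
      next
        case (Suc a')
        with half have "odd (q div 2)" by simp
        with 1 assms(2) have False by presburger
        then show ?thesis ..
      qed
    qed
  next
    assume 2: "q = 2 * (q div 2) + 1"
    from a show ?thesis
    proof
      assume half: "q div 2 = 2^a"
      with 2 assms(2) have "odd ((2::nat)^a)" by simp
      then have "a = 0" by simp
      with 2 half have "q = 2^2 - 1" by simp
      then show ?thesis unfolding pow2_or_pred_def by blast
    next
      assume "q div 2 = 2^a - 1"
      moreover have "(2::nat) ^ a \<ge> 1" by simp
      ultimately have "q = 2 ^ Suc a - 1" using 2 by (simp; linarith)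
      then show ?thesis unfolding pow2_or_pred_def by blast
    qed
  qed
qed

text \<open>
  The threshold 31 is where the induction closes: for \<open>q \<ge> 62\<close> we have \<open>q div 2 \<ge> 31\<close> and
  \<open>(q - 1) div 2 \<ge> 16\<close>, too large for an even \<open>j\<close> with \<open>b(j) \<le> 4\<close>.
\<close>

lemma pow2_or_pred_if_v_double_le_3:
  assumes "31 \<le> q" and "v (2*q) \<le> 3"
  shows "pow2_or_pred q"
  using assms
proof (induction q rule: less_induct)
  case (less q)
  show ?case
  proof (cases "q < 62")
    case True
    with less.prems v_double_small have "q \<in> {31, 32}" by blast
    moreover have "pow2_or_pred 31" "pow2_or_pred 32"
      unfolding pow2_or_pred_def by (intro exI[of _ 5]; simp)+
    ultimately show ?thesis by auto
  next
    case False
    define j where "j = (q - 1) div 2"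
    have rec: "v (2*q) = v (2 * (q div 2)) + v j + int (b j) - 1"
      using v_double[of q] False by (simp add: j_def)
    have "0 \<le> v j" "0 \<le> v (2 * (q div 2))" "1 \<le> b j"
      using v_nonneg b_pos by auto
    with rec less.prems have "v (2 * (q div 2)) \<le> 3" "b j \<le> 4"
      by linarith+
    from \<open>v (2 * (q div 2)) \<le> 3\<close> False have "pow2_or_pred (q div 2)"
      by (intro less.IH) auto
    moreover have "odd j"
    proof
      assume "even j"
      have "j < 2 ^ b j" by (rule even_less_exp_b) fact
      also have "\<dots> \<le> 2 ^ 4" using \<open>b j \<le> 4\<close> by (intro power_increasing) auto
      finally show False using False by (simp add: j_def)
    qed
    ultimately show ?thesis
      unfolding j_def by (rule pow2_or_pred_of_half)
  qed
qed

theorem mainTheorem5: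
  fixes n :: nat
  assumes "even n"
  shows "v n = 3 \<longleftrightarrow> n \<in> {20, 26, 34, 46, 48, 60}"
proof -
  obtain q where n: "n = 2*q" using assms by blast
  have "v (2*q) = 3 \<longleftrightarrow> q \<in> {10, 13, 17, 23, 24, 30}"
  proof (cases "q < 62")
    case True
    then show ?thesis using v_double_small by blast
  next
    case False
    have "v (2*q) \<noteq> 3"
    proof
      assume "v (2*q) = 3"
      with False have "pow2_or_pred q"
        by (intro pow2_or_pred_if_v_double_le_3) auto
      then have "v (2*q) = 0" by (rule v_double_pow2_or_pred)
      with \<open>v (2*q) = 3\<close> show False by simp
    qed
    with False show ?thesis by auto
  qed
  then show ?thesis using n by auto
qed

end
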